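(* Let $\tau(\lambda)$ denote Kendall's tau of the power-divergence copula $C_\lambda$, i.e. $\tau(\lambda)=1+4\int_0^1 \phi_\lambda(s)/\phi_\lambda'(s)\,ds$; explicitly $\tau(\lambda)=1+\frac{2}{\lambda+1}-\frac{4\lambda}{\lambda+1}\int_0^1\frac{s-1}{s^\lambda-1}\,ds$ for $\lambda\ne-1,0$, $\tau(0)=3-4\log 2$, $\tau(-1)=7-2\pi^2/3$. Then $\tau$ is a monotone non-increasing function of $\lambda\in(-\infty,\infty)$.
   Context: For $\lambda\in\mathbb{R}$ define $\phi_\lambda$ on $[0,\infty)$ by $\phi_\lambda(x)=\frac{1}{\lambda(\lambda+1)}(x^{\lambda+1}-x+\lambda(1-x))$ for $\lambda\neq-1,0$; $\phi_0(x)=1-x+x\log x$; $\phi_{-1}(x)=x-1-\log x$; values at $x=0$ are limits, so $\phi_\lambda(0)=1/(\lambda+1)$ for $\lambda>-1$ and $\phi_\lambda(0)=\infty$ for $\lambda\le-1$. On $[0,1]$, $\phi_\lambda$ is convex, strictly decreasing, $\phi_\lambda(1)=0$. The pseudoinverse is $\phi_\lambda^{[-1]}(t)=\phi_\lambda^{-1}(t)$ (inverse of $\phi_\lambda|_{[0,1]}$) for $0\le t<\phi_\lambda(0)$ and $0$ for $t\ge\phi_\lambda(0)$. The power-divergence (PD) copula is $C_\lambda(u_1,u_2)=\phi_\lambda^{[-1]}(\phi_\lambda(u_1)+\phi_\lambda(u_2))$, $u_1,u_2\in[0,1]$ (with $\phi_\lambda^{[-1]}(\infty)=0$). Kendall's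 tau of a copula $C$ is the population Kendall's tau of a random vector with distribution $C$. *)

theory Defs
  imports "HOL-Analysis.Analysis"
begin

text \<open>Only its values on (0,1]
  enter the Kendall's tau formula; at x = 0 the real-valued definition below
  need not agree with the extended-real limit (which may be infinity), but a single point
  does not affect the integral.\<close>
definition pd_phi :: "real \<Rightarrow> real \<Rightarrow> real" where
  "pd_phi lam x =
     (if lam = 0 then 1 - x + x * ln x
      else if lam = -1 then x - 1 - ln x
      else (x powr (lam + 1) - x + lam * (1 - x)) / (lam * (lam + 1)))"

definition pd_tau :: "real \<Rightarrow> real" where
  "pd_tau lam = 1 + 4 * integral {0..1} (\<lambda>s. pd_phi lam s / deriv (pd_phi lam) s)"

end

theory Submission
  imports Defs
begin

text \<open>Write \<open>D\<^sub>a(s) = \<integral>\<^sub>s\<^sup>1 v\<^bsup>a-1\<^esup> dv\<close>. Then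
  \<open>\<phi>\<^sub>\<lambda>(s) = D\<^sub>\<lambda>\<^sub>+\<^sub>1(s) - s D\<^sub>\<lambda>(s)\<close> and \<open>\<phi>\<^sub>\<lambda>'(s) = -D\<^sub>\<lambda>(s)\<close>, so
  \<open>\<phi>\<^sub>\<lambda>(s)/\<phi>\<^sub>\<lambda>'(s) = s - m\<^sub>\<lambda>(s)\<close>, where \<open>m\<^sub>\<lambda>(s) = D\<^sub>\<lambda>\<^sub>+\<^sub>1(s)/D\<^sub>\<lambda>(s)\<close> is the mean
  of the probability density proportional to \<open>v\<^bsup>\<lambda>-1\<^esup>\<close> on \<open>[s,1]\<close>. Raising \<open>\<lambda>\<close>
  tilts this density to the right (the likelihood ratio \<open>v\<^bsup>\<mu>-\<lambda>\<^esup>\<close> is increasing),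
  so \<open>m\<^sub>\<lambda>(s)\<close> increases in \<open>\<lambda>\<close> for every \<open>s\<close>, and \<open>\<tau>(\<lambda>)\<close> decreases.\<close>

definition powr_integral :: "real \<Rightarrow> real \<Rightarrow> real" where
  "powr_integral a s = (if a = 0 then - ln s else (1 - s powr a) / a)"

definition tilted_mean :: "real \<Rightarrow> real \<Rightarrow> real" where
  "tilted_mean lam s = powr_integral (lam + 1) s / powr_integral lam s"

lemma has_integral_powr_integral:
  assumes "0 < s" "s \<le> 1"
  shows "((\<lambda>v. v powr (a - 1)) has_integral powr_integral a s) {s..1}"
proof -
  define F where "F = (\<lambda>v::real. if a = 0 then ln v else v powr a / a)"
  have "((\<lambda>v. v powr (a - 1)) has_integral (F 1 - F s)) {s..1}"
  proof (rule fundamental_theorem_of_calculus[OF assms(2)])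
    fix x assume "x \<in> {s..1}"
    then have "x > 0" using assms by auto
    then have "(F has_real_derivative x powr (a - 1)) (at x)"
      unfolding F_def
      by (cases "a = 0") (auto intro!: derivative_eq_intros simp: powr_neg_one)
    then show "(F has_vector_derivative x powr (a - 1)) (at x within {s..1})"
      by (simp add: has_real_derivative_iff_has_vector_derivative[symmetric] has_field_derivative_at_within)
  qed
  moreover have "F 1 - F s = powr_integral a s"
    unfolding F_def powr_integral_def by (auto simp: diff_divide_distrib)
  ultimately show ?thesis by simp
qed

lemma powr_integral_pos:
  assumes "0 < s" "s < 1"
  shows "powr_integral a s > 0"
proof -
  consider "a = 0" | "a > 0" | "a < 0" by linarith
  then show ?thesis
  proof cases
    case 2
    then have "s powr a < 1 powr a" using assms by (intro powr_less_mono2) auto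
    then show ?thesis using 2 by (simp add: powr_integral_def)
  next
    case 3
    then have "s powr (-a) < 1 powr (-a)" using assms by (intro powr_less_mono2) auto
    then have "s powr a > 1" using assms by (simp add: powr_minus_divide divide_simps)
    then show ?thesis using 3 by (simp add: powr_integral_def divide_simps)
  qed (use assms in \<open>simp add: powr_integral_def\<close>)
qed

lemma continuous_on_powr_integral: "continuous_on {0<..} (powr_integral a)"
  unfolding powr_integral_def
  by (cases "a = 0") (auto intro!: continuous_intros)

lemma pd_phi_eq_powr_integral:
  assumes "0 < s"
  shows "pd_phi lam s = powr_integral (lam + 1) s - s * powr_integral lam s"
proof -
  consider "lam = 0" | "lam = -1" | "lam \<noteq> 0" "lam + 1 \<noteq> 0" by linarith
  then show ?thesis
  proof cases
    case 3
    have "s powr (lam + 1) = s * s powr lam" using assms by (simp add: powr_add)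
    with 3 show ?thesis unfolding pd_phi_def powr_integral_def by (simp add: field_simps)
  qed (use assms in \<open>simp_all add: pd_phi_def powr_integral_def powr_neg_one algebra_simps\<close>)
qed

lemma pd_phi_has_real_derivative:
  assumes "0 < s"
  shows "(pd_phi lam has_real_derivative - powr_integral lam s) (at s)"
proof -
  consider "lam = 0" | "lam = -1" | "lam \<noteq> 0" "lam + 1 \<noteq> 0" by linarith
  then show ?thesis
  proof cases
    case 1
    then have "pd_phi lam = (\<lambda>x. 1 - x + x * ln x)" by (auto simp: pd_phi_def fun_eq_iff)
    then show ?thesis
      using 1 assms by (auto intro!: derivative_eq_intros simp: powr_integral_def)
  next
    case 2
    then have "pd_phi lam = (\<lambda>x. x - 1 - ln x)" by (auto simp: pd_phi_def fun_eq_iff)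
    then show ?thesis
      using 2 assms by (auto intro!: derivative_eq_intros simp: powr_integral_def powr_neg_one)
  next
    case 3
    then have "pd_phi lam = (\<lambda>x. (x powr (lam + 1) - x + lam * (1 - x)) / (lam * (lam + 1)))"
      by (auto simp: pd_phi_def fun_eq_iff)
    moreover have "((\<lambda>x. (x powr (lam + 1) - x + lam * (1 - x)) / (lam * (lam + 1)))
        has_real_derivative ((lam + 1) * s powr (lam + 1 - 1) - 1 + lam * (0 - 1)) / (lam * (lam + 1))) (at s)"
      by (intro DERIV_cdivide DERIV_add DERIV_diff has_real_derivative_powr[OF assms]
          DERIV_ident DERIV_cmult DERIV_const)
    moreover have "((lam + 1) * s powr (lam + 1 - 1) - 1 + lam * (0 - 1)) / (lam * (lam + 1))
        = - powr_integral lam s"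
    proof -
      have "((lam + 1) * s powr (lam + 1 - 1) - 1 + lam * (0 - 1)) / (lam * (lam + 1))
          = (lam + 1) * (s powr lam - 1) / ((lam + 1) * lam)"
        by (simp add: algebra_simps)
      also have "\<dots> = - powr_integral lam s"
        using 3 by (simp add: powr_integral_def minus_divide_left)
      finally show ?thesis .
    qed
    ultimately show ?thesis by simp
  qed
qed

lemma pd_phi_div_deriv_eq:
  assumes "0 < s" "s < 1"
  shows "pd_phi lam s / deriv (pd_phi lam) s = s - tilted_mean lam s"
proof -
  have "deriv (pd_phi lam) s = - powr_integral lam s"
    using pd_phi_has_real_derivative[OF assms(1)] by (rule DERIV_imp_deriv)
  then show ?thesis
    using powr_integral_pos[OF assms, of lam]
    unfolding pd_phi_eq_powr_integral[OF assms(1)] tilted_mean_def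
    by (simp add: field_simps)
qed

lemma tilted_mean_bounds:
  assumes "0 < s" "s < 1"
  shows "s \<le> tilted_mean lam s" "tilted_mean lam s \<le> 1"
proof -
  have D: "((\<lambda>v. v powr (lam - 1)) has_integral powr_integral lam s) {s..1}"
    using has_integral_powr_integral assms by simp
  have D1: "((\<lambda>v. v * v powr (lam - 1)) has_integral powr_integral (lam + 1) s) {s..1}"
    using has_integral_powr_integral[of s "lam + 1"] assms
    by (subst has_integral_cong[where g = "\<lambda>v. v powr (lam + 1 - 1)"]) (auto simp: powr_mult_base)
  have "s * powr_integral lam s \<le> powr_integral (lam + 1) s"
    by (rule has_integral_le[OF has_integral_mult_right[OF D] D1]) (auto intro: mult_right_mono)
  moreover have "powr_integral (lam + 1) s \<le> powr_integral lam s"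
    using assms by (intro has_integral_le[OF D1 D]) (auto intro: mult_left_le_one_le)
  ultimately show "s \<le> tilted_mean lam s" "tilted_mean lam s \<le> 1"
    using powr_integral_pos[OF assms, of lam] by (simp_all add: tilted_mean_def field_simps)
qed

lemma continuous_on_tilted_mean: "continuous_on {0<..<1} (tilted_mean lam)"
proof -
  have cont: "continuous_on {0<..<1} (powr_integral a)" for a
    by (rule continuous_on_subset[OF continuous_on_powr_integral]) auto
  show ?thesis
    unfolding tilted_mean_def
    by (intro continuous_intros cont) (use powr_integral_pos[of _ lam] in force)
qed

lemma single_crossing_first_moment_nonneg:
  fixes w :: "real \<Rightarrow> real"
  assumes "(w has_integral 0) S" "((\<lambda>v. v * w v) has_integral I) S"
    and "\<And>v. v \<in> S \<Longrightarrow> 0 \<le> (v - v0) * w v"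
  shows "0 \<le> I"
proof -
  have "((\<lambda>v. (v - v0) * w v) has_integral I) S"
    using has_integral_diff[OF assms(2) has_integral_mult_right[OF assms(1), of v0]]
    by (simp add: left_diff_distrib)
  then show ?thesis
    using assms(3) by (rule has_integral_nonneg)
qed

lemma powr_difference_single_crossing:
  fixes c v :: real
  assumes "0 < c" "0 < v" "lam < mu"
  defines "v0 \<equiv> (1 / c) powr (1 / (mu - lam))"
  shows "0 \<le> (v - v0) * (c * v powr (mu - 1) - v powr (lam - 1))"
proof -
  have "v0 > 0" using assms(1) by (simp add: v0_def)
  have v0_powr: "v0 powr (mu - lam) = 1 / c"
    using assms(1,3) by (simp add: v0_def powr_powr)
  have factor: "c * v powr (mu - 1) - v powr (lam - 1) = v powr (lam - 1) * (c * v powr (mu - lam) - 1)"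
    using assms(2) by (simp add: algebra_simps flip: powr_add)
  show ?thesis
  proof (cases "v \<le> v0")
    case True
    then have "v powr (mu - lam) \<le> v0 powr (mu - lam)"
      using assms(2,3) by (intro powr_mono2) auto
    then have "c * v powr (mu - lam) \<le> 1"
      using assms(1) by (simp add: v0_powr field_simps)
    then show ?thesis
      unfolding factor using True assms(2) by (auto intro!: mult_nonpos_nonpos mult_nonneg_nonpos)
  next
    case False
    then have "v0 powr (mu - lam) \<le> v powr (mu - lam)"
      using \<open>v0 > 0\<close> assms(3) by (intro powr_mono2) auto
    then have "1 \<le> c * v powr (mu - lam)"
      using assms(1) by (simp add: v0_powr field_simps)
    then show ?thesis
      unfolding factor using False assms(2) by auto
  qed
qed

lemma tilted_mean_mono:
  assumes s: "0 < s" "s < 1" and "lam < mu"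
  shows "tilted_mean lam s \<le> tilted_mean mu s"
proof -
  define c where "c = powr_integral lam s / powr_integral mu s"
  define w where "w v = c * v powr (mu - 1) - v powr (lam - 1)" for v
  have "c > 0" using powr_integral_pos[OF s] by (simp add: c_def)
  have D: "((\<lambda>v. v powr (a - 1)) has_integral powr_integral a s) {s..1}" for a
    using has_integral_powr_integral s by simp
  have "(w has_integral c * powr_integral mu s - powr_integral lam s) {s..1}"
    unfolding w_def by (intro has_integral_diff has_integral_mult_right D)
  then have w_int: "(w has_integral 0) {s..1}"
    using powr_integral_pos[OF s, of mu] by (simp add: c_def)
  have "((\<lambda>v. c * v powr (mu + 1 - 1) - v powr (lam + 1 - 1)) has_integral
      c * powr_integral (mu + 1) s - powr_integral (lam + 1) s) {s..1}"
    by (intro has_integral_diff has_integral_mult_right D)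
  then have vw_int: "((\<lambda>v. v * w v) has_integral
      c * powr_integral (mu + 1) s - powr_integral (lam + 1) s) {s..1}"
    using s by (subst has_integral_cong) (auto simp: w_def algebra_simps powr_mult_base)
  have "0 \<le> c * powr_integral (mu + 1) s - powr_integral (lam + 1) s"
  proof (rule single_crossing_first_moment_nonneg[OF w_int vw_int])
    show "0 \<le> (v - (1 / c) powr (1 / (mu - lam))) * w v" if "v \<in> {s..1}" for v
      unfolding w_def using that s \<open>c > 0\<close> \<open>lam < mu\<close>
      by (intro powr_difference_single_crossing) auto
  qed
  then show ?thesis
    using powr_integral_pos[OF s] by (simp add: tilted_mean_def c_def field_simps)
qed

lemma tilted_mean_integrable: "(\<lambda>s. s - tilted_mean lam s) integrable_on {0<..<1}"
proof (rule measurable_bounded_by_integrable_imp_integrable_real)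
  show "(\<lambda>s. s - tilted_mean lam s) \<in> borel_measurable (lebesgue_on {0<..<1})"
    by (intro continuous_imp_measurable_on_sets_lebesgue continuous_intros
        continuous_on_tilted_mean) auto
  show "(\<lambda>_. 1::real) integrable_on {0<..<(1::real)}"
    using integrable_on_Icc_iff_Ioo integrable_const_ivl by blast
  show "\<bar>s - tilted_mean lam s\<bar> \<le> 1" if "s \<in> {0<..<1}" for s
    using tilted_mean_bounds[of s lam] that by auto
qed auto

lemma pd_tau_eq_tilted_mean:
  "pd_tau lam = 1 + 4 * integral {0<..<1} (\<lambda>s. s - tilted_mean lam s)"
proof -
  have "integral {0..1} (\<lambda>s. pd_phi lam s / deriv (pd_phi lam) s)
      = integral {0<..<1} (\<lambda>s. pd_phi lam s / deriv (pd_phi lam) s)"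
    by (rule integral_open_interval_real)
  also have "\<dots> = integral {0<..<1} (\<lambda>s. s - tilted_mean lam s)"
    by (rule integral_cong) (simp add: pd_phi_div_deriv_eq)
  finally show ?thesis unfolding pd_tau_def by simp
qed

theorem proposition4:
  shows "antimono pd_tau"
proof (rule antimonoI)
  fix lam mu :: real
  assume "lam \<le> mu"
  then have "tilted_mean lam s \<le> tilted_mean mu s" if "s \<in> {0<..<1}" for s
    using tilted_mean_mono[of s lam mu] that by (cases "lam = mu") auto
  then have "integral {0<..<1} (\<lambda>s. s - tilted_mean mu s)
      \<le> integral {0<..<1} (\<lambda>s. s - tilted_mean lam s)"
    by (intro integral_le tilted_mean_integrable) auto
  then show "pd_tau mu \<le> pd_tau lam" unfolding pd_tau_eq_tilted_mean by simp
qed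

end
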